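(* Let $\mathcal V \subset B(H)$ be an operator system and $p \in \mathcal V$ be a projection. Set $q = I-p$. Then for every $n \in \mathbb{N}$ and $x \in M_n(\mathcal V)$ we have that $x \in C_n$ if and only if $\begin{pmatrix} x & x \\ x & x \end{pmatrix} \in C(p_n \oplus q_n)$.
   Context: Here $C_n = M_n(\mathcal V) \cap B(H^n)^+$ is the positive cone of $M_n(\mathcal V)$, $p_n = I_n \otimes p$, $q_n = I_n \otimes q$, and $C(p_n \oplus q_n) = \{ y \in M_{2n}(\mathcal V) : y = y^*, \ (p_n \oplus q_n) y (p_n \oplus q_n) \in B(H^{2n})^+\}$, where $M_{2n}(\mathcal V)$ is identified with $M_2(M_n(\mathcal V))$. *)

theory Defs
  imports Complex_Main
begin

(* A complex Hilbert space H is modelled by a type 'h with addition, a complex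
   scalar multiplication sc and an inner product ip (linear in the first argument). *)

definition hnorm :: "('h \<Rightarrow> 'h \<Rightarrow> complex) \<Rightarrow> 'h \<Rightarrow> real" where
  "hnorm ip u = sqrt (Re (ip u u))"

definition hilbert_space :: "(complex \<Rightarrow> 'h::ab_group_add \<Rightarrow> 'h) \<Rightarrow> ('h \<Rightarrow> 'h \<Rightarrow> complex) \<Rightarrow> bool" where
  "hilbert_space sc ip \<longleftrightarrow>
     vector_space (sc :: complex \<Rightarrow> 'h \<Rightarrow> 'h) \<and>
     (\<forall>a u w v. ip (sc a u + w) v = a * ip u v + ip w v) \<and>
     (\<forall>u v. ip v u = cnj (ip u v)) \<and>
     (\<forall>u. Im (ip u u) = 0 \<and> Re (ip u u) \<ge> 0) \<and>
     (\<forall>u. ip u u = 0 \<longrightarrow> u = 0) \<and>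
     (\<forall>X. (\<forall>e>0. \<exists>N::nat. \<forall>m\<ge>N. \<forall>k\<ge>N. hnorm ip (X m - X k) < e)
          \<longrightarrow> (\<exists>L. \<forall>e>0. \<exists>N::nat. \<forall>m\<ge>N. hnorm ip (X m - L) < e))"

definition bounded_op :: "(complex \<Rightarrow> 'h::ab_group_add \<Rightarrow> 'h) \<Rightarrow> ('h \<Rightarrow> 'h \<Rightarrow> complex) \<Rightarrow> ('h \<Rightarrow> 'h) \<Rightarrow> bool" where
  "bounded_op sc ip T \<longleftrightarrow>
     (\<forall>a u v. T (sc a u + v) = sc a (T u) + T v) \<and>
     (\<exists>K. \<forall>u. hnorm ip (T u) \<le> K * hnorm ip u)"

definition is_adjoint :: "('h \<Rightarrow> 'h \<Rightarrow> complex) \<Rightarrow> ('h \<Rightarrow> 'h) \<Rightarrow> ('h \<Rightarrow> 'h) \<Rightarrow> bool" where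
  "is_adjoint ip T S \<longleftrightarrow> (\<forall>u v. ip (T u) v = ip u (S v))"

definition operator_system :: "(complex \<Rightarrow> 'h::ab_group_add \<Rightarrow> 'h) \<Rightarrow> ('h \<Rightarrow> 'h \<Rightarrow> complex) \<Rightarrow> ('h \<Rightarrow> 'h) set \<Rightarrow> bool" where
  "operator_system sc ip V \<longleftrightarrow>
     V \<subseteq> {T. bounded_op sc ip T} \<and> id \<in> V \<and>
     (\<forall>S\<in>V. \<forall>T\<in>V. \<forall>a. (\<lambda>u. sc a (S u) + T u) \<in> V) \<and>
     (\<forall>T\<in>V. \<exists>S\<in>V. is_adjoint ip T S)"

definition is_projection :: "(complex \<Rightarrow> 'h::ab_group_add \<Rightarrow> 'h) \<Rightarrow> ('h \<Rightarrow> 'h \<Rightarrow> complex) \<Rightarrow> ('h \<Rightarrow> 'h) \<Rightarrow> bool" where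
  "is_projection sc ip p \<longleftrightarrow> bounded_op sc ip p \<and> p \<circ> p = p \<and> is_adjoint ip p p"

definition in_Mn :: "('h \<Rightarrow> 'h) set \<Rightarrow> nat \<Rightarrow> (nat \<Rightarrow> nat \<Rightarrow> ('h \<Rightarrow> 'h)) \<Rightarrow> bool" where
  "in_Mn V n x \<longleftrightarrow> (\<forall>i<n. \<forall>j<n. x i j \<in> V)"

(* the matrix y, acting on H^n, is a positive operator in B(H^n) *)
definition pos_Hn :: "('h::ab_group_add \<Rightarrow> 'h \<Rightarrow> complex) \<Rightarrow> nat \<Rightarrow> (nat \<Rightarrow> nat \<Rightarrow> ('h \<Rightarrow> 'h)) \<Rightarrow> bool" where
  "pos_Hn ip n y \<longleftrightarrow>
     (\<forall>u :: nat \<Rightarrow> 'h. Im (\<Sum>i<n. ip (\<Sum>j<n. y i j (u j)) (u i)) = 0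
                    \<and> Re (\<Sum>i<n. ip (\<Sum>j<n. y i j (u j)) (u i)) \<ge> 0)"

definition selfadj_Mn :: "('h \<Rightarrow> 'h \<Rightarrow> complex) \<Rightarrow> nat \<Rightarrow> (nat \<Rightarrow> nat \<Rightarrow> ('h \<Rightarrow> 'h)) \<Rightarrow> bool" where
  "selfadj_Mn ip n y \<longleftrightarrow> (\<forall>i<n. \<forall>j<n. is_adjoint ip (y i j) (y j i))"

definition cone_C :: "('h::ab_group_add \<Rightarrow> 'h \<Rightarrow> complex) \<Rightarrow> ('h \<Rightarrow> 'h) set \<Rightarrow> nat \<Rightarrow> (nat \<Rightarrow> nat \<Rightarrow> ('h \<Rightarrow> 'h)) \<Rightarrow> bool" where
  "cone_C ip V n x \<longleftrightarrow> in_Mn V n x \<and> pos_Hn ip n x"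

(* p_n \<oplus> q_n as a diagonal 2n x 2n matrix, given by its diagonal entries *)
definition diag_pq :: "nat \<Rightarrow> ('h \<Rightarrow> 'h) \<Rightarrow> ('h::ab_group_add \<Rightarrow> 'h) \<Rightarrow> nat \<Rightarrow> ('h \<Rightarrow> 'h)" where
  "diag_pq n p q i = (if i < n then p else q)"

(* C(P) for a diagonal 2n x 2n matrix P with diagonal d:
   y \<in> M_{2n}(V), y = y^*, and P y P \<in> B(H^{2n})^+ *)
definition cone_CP :: "('h::ab_group_add \<Rightarrow> 'h \<Rightarrow> complex) \<Rightarrow> ('h \<Rightarrow> 'h) set \<Rightarrow> nat \<Rightarrow> (nat \<Rightarrow> ('h \<Rightarrow> 'h))
     \<Rightarrow> (nat \<Rightarrow> nat \<Rightarrow> ('h \<Rightarrow> 'h)) \<Rightarrow> bool" where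
  "cone_CP ip V m d y \<longleftrightarrow> in_Mn V m y \<and> selfadj_Mn ip m y \<and>
     pos_Hn ip m (\<lambda>i j. d i \<circ> y i j \<circ> d j)"

(* the block matrix [[x, x], [x, x]] in M_2(M_n(V)) = M_{2n}(V) *)
definition block_xx :: "nat \<Rightarrow> (nat \<Rightarrow> nat \<Rightarrow> 'a) \<Rightarrow> nat \<Rightarrow> nat \<Rightarrow> 'a" where
  "block_xx n x i j = x (i mod n) (j mod n)"

end

theory Submission
  imports Defs "HOL-Library.Complex_Order"
begin

(* Write Q_y(u) for the quadratic form of an operator matrix y on H^m, and d for the diagonal
   p_n \<oplus> q_n. Since p and q = I - p are self-adjoint, the form of d [[x,x],[x,x]] d at
   u = (u', u'') is Q_x(p u' + q u''); every vector of H^n is of this shape (take u' = u'' = v,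
   since p v + q v = v), so the compressed block matrix is positive exactly when x is.
   Self-adjointness of the block matrix, the remaining condition of C(p_n \<oplus> q_n), follows from
   positivity of x by polarization. *)

lemma sum_lessThan_double:
  fixes n :: nat
  shows "(\<Sum>i<2 * n. f i) = (\<Sum>i<n. f i) + (\<Sum>i<n. f (i + n))"
proof -
  have "(\<Sum>i<2 * n. f i) = (\<Sum>i\<in>{0..<n}. f i) + (\<Sum>i\<in>{n..<n + n}. f i)"
    by (simp add: atLeast0LessThan[symmetric] sum.atLeastLessThan_concat mult_2)
  also have "(\<Sum>i\<in>{n..<n + n}. f i) = (\<Sum>i<n. f (i + n))"
    using sum.shift_bounds_nat_ivl[of f 0 n n] by (simp add: atLeast0LessThan add.commute)
  finally show ?thesis
    by (simp add: atLeast0LessThan)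
qed

lemma mod_less_of_less_double: "i < 2 * n \<Longrightarrow> i mod (n::nat) < n"
  by (cases "n = 0") auto

lemma in_Mn_block_xx: "in_Mn V n x \<Longrightarrow> in_Mn V (2 * n) (block_xx n x)"
  unfolding in_Mn_def block_xx_def by (blast intro: mod_less_of_less_double)

lemma selfadj_Mn_block_xx: "selfadj_Mn ip n x \<Longrightarrow> selfadj_Mn ip (2 * n) (block_xx n x)"
  unfolding selfadj_Mn_def block_xx_def by (blast intro: mod_less_of_less_double)

definition op_matrix_form ::
    "('h \<Rightarrow> 'h \<Rightarrow> complex) \<Rightarrow> nat \<Rightarrow> (nat \<Rightarrow> nat \<Rightarrow> 'h \<Rightarrow> 'h) \<Rightarrow> (nat \<Rightarrow> 'h) \<Rightarrow> (nat \<Rightarrow> 'h) \<Rightarrow> complex"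
  where "op_matrix_form ip n y u w = (\<Sum>i<n. \<Sum>j<n. ip (y i j (u j)) (w i))"

lemma op_matrix_form_cong:
  "(\<And>j. j < n \<Longrightarrow> u j = u' j) \<Longrightarrow> (\<And>j. j < n \<Longrightarrow> w j = w' j) \<Longrightarrow>
    op_matrix_form ip n y u w = op_matrix_form ip n y u' w'"
  unfolding op_matrix_form_def by (intro sum.cong refl) auto

context
  fixes sc :: "complex \<Rightarrow> 'h::ab_group_add \<Rightarrow> 'h" and ip :: "'h \<Rightarrow> 'h \<Rightarrow> complex"
  assumes hs: "hilbert_space sc ip"
begin

lemma scale_one: "sc 1 u = u"
  using hs unfolding hilbert_space_def vector_space_def by blast

lemma ip_linear_left: "ip (sc a u + w) v = a * ip u v + ip w v"
  using hs unfolding hilbert_space_def by blast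

lemma ip_conj_sym: "ip v u = cnj (ip u v)"
  using hs unfolding hilbert_space_def by blast

lemma ip_add_left: "ip (u + w) v = ip u v + ip w v"
  using ip_linear_left[of 1 u w v] by (simp add: scale_one)

lemma ip_zero_left [simp]: "ip 0 v = 0"
  using ip_add_left[of 0 0 v] by simp

lemma ip_diff_left: "ip (u - w) v = ip u v - ip w v"
  using ip_add_left[of "u - w" w v] by simp

lemma ip_add_right: "ip v (u + w) = ip v u + ip v w"
  by (metis ip_conj_sym ip_add_left complex_cnj_add)

lemma ip_zero_right [simp]: "ip v 0 = 0"
  by (metis ip_conj_sym ip_zero_left complex_cnj_zero)

lemma ip_scale_right: "ip v (sc a u) = cnj a * ip v u"
  by (metis ip_conj_sym ip_linear_left add.right_neutral ip_zero_left complex_cnj_mult)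

lemma ip_diff_right: "ip v (u - w) = ip v u - ip v w"
  by (metis ip_conj_sym ip_diff_left complex_cnj_diff)

lemma ip_sum_left: "ip (sum f A) v = (\<Sum>j\<in>A. ip (f j) v)"
  by (induct A rule: infinite_finite_induct) (auto simp: ip_add_left)

lemma pos_Hn_iff_op_matrix_form_nonneg:
  "pos_Hn ip n y \<longleftrightarrow> (\<forall>u. 0 \<le> op_matrix_form ip n y u u)"
proof -
  have "(\<Sum>i<n. ip (\<Sum>j<n. y i j (u j)) (u i)) = op_matrix_form ip n y u u" for u
    unfolding op_matrix_form_def by (simp add: ip_sum_left)
  then show ?thesis
    unfolding pos_Hn_def less_eq_complex_def by auto
qed

lemma op_matrix_form_linear_right:
  "op_matrix_form ip n y t (\<lambda>i. sc c (u i) + w i)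
    = cnj c * op_matrix_form ip n y t u + op_matrix_form ip n y t w"
proof -
  have "op_matrix_form ip n y t (\<lambda>i. sc c (u i) + w i)
      = (\<Sum>i<n. \<Sum>j<n. cnj c * ip (y i j (t j)) (u i) + ip (y i j (t j)) (w i))"
    unfolding op_matrix_form_def
    by (intro sum.cong refl) (simp add: ip_add_right ip_scale_right)
  then show ?thesis
    unfolding op_matrix_form_def by (simp add: sum.distrib sum_distrib_left)
qed

lemma op_matrix_form_add_right:
  "op_matrix_form ip n y t (\<lambda>j. u j + w j) = op_matrix_form ip n y t u + op_matrix_form ip n y t w"
  using op_matrix_form_linear_right[where c = 1] by (simp add: scale_one)

lemma bounded_op_linear: "bounded_op sc ip T \<Longrightarrow> T (sc a u + w) = sc a (T u) + T w"
  unfolding bounded_op_def by blast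

lemma bounded_op_zero: "bounded_op sc ip T \<Longrightarrow> T 0 = 0"
  using bounded_op_linear[of T 1 0 0] by (simp add: scale_one)

lemma is_adjoint_complement:
  assumes "is_adjoint ip p p"
  shows "is_adjoint ip (\<lambda>u. u - p u) (\<lambda>u. u - p u)"
  using assms unfolding is_adjoint_def by (simp add: ip_diff_left ip_diff_right)

end

context
  fixes sc :: "complex \<Rightarrow> 'h::ab_group_add \<Rightarrow> 'h" and ip :: "'h \<Rightarrow> 'h \<Rightarrow> complex"
    and n :: nat and x :: "nat \<Rightarrow> nat \<Rightarrow> 'h \<Rightarrow> 'h"
  assumes hs: "hilbert_space sc ip"
    and bounded: "\<And>i j. i < n \<Longrightarrow> j < n \<Longrightarrow> bounded_op sc ip (x i j)"
begin

lemma op_matrix_form_linear_left: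
  "op_matrix_form ip n x (\<lambda>j. sc c (u j) + w j) t
    = c * op_matrix_form ip n x u t + op_matrix_form ip n x w t"
proof -
  have "op_matrix_form ip n x (\<lambda>j. sc c (u j) + w j) t
      = (\<Sum>i<n. \<Sum>j<n. c * ip (x i j (u j)) (t i) + ip (x i j (w j)) (t i))"
    unfolding op_matrix_form_def
    by (intro sum.cong refl) (simp add: bounded_op_linear[OF hs bounded] ip_linear_left[OF hs])
  then show ?thesis
    unfolding op_matrix_form_def by (simp add: sum.distrib sum_distrib_left)
qed

lemma op_matrix_form_add_left:
  "op_matrix_form ip n x (\<lambda>j. u j + w j) t = op_matrix_form ip n x u t + op_matrix_form ip n x w t"
  using op_matrix_form_linear_left[where c = 1] by (simp add: scale_one[OF hs])

lemma op_matrix_form_hermitian: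
  assumes real: "\<And>u. op_matrix_form ip n x u u \<in> \<real>"
  shows "op_matrix_form ip n x u w = cnj (op_matrix_form ip n x w u)"
proof -
  let ?f = "op_matrix_form ip n x"
  have real_im: "Im (?f v v) = 0" for v
    using real[of v] by (simp add: complex_is_Real_iff)
  have expand: "?f (\<lambda>j. sc c (w j) + u j) (\<lambda>j. sc c (w j) + u j)
      = c * (cnj c * ?f w w + ?f w u) + (cnj c * ?f u w + ?f u u)" for c
    unfolding op_matrix_form_linear_left op_matrix_form_linear_right[OF hs]
    by (simp add: algebra_simps)
  have mixed_real: "Im (c * ?f w u + cnj c * ?f u w) = 0" for c
    using expand[of c] real_im[of "\<lambda>j. sc c (w j) + u j"] real_im[of w] real_im[of u]
    by (simp add: algebra_simps)
  have "Im (?f w u + ?f u w) = 0" and "Re (?f w u) - Re (?f u w) = 0"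
    using mixed_real[of 1] mixed_real[of "\<i>"] by simp_all
  then show ?thesis
    by (simp add: complex_eq_iff)
qed

lemma op_matrix_form_unit_vectors:
  assumes "a < n" "b < n"
  shows "op_matrix_form ip n x (\<lambda>j. if j = b then v else 0) (\<lambda>i. if i = a then z else 0)
    = ip (x a b v) z"
proof -
  have entry: "ip (x i j (if j = b then v else 0)) (if i = a then z else 0)
      = (if i = a then if j = b then ip (x a b v) z else 0 else 0)" if "i < n" "j < n" for i j
    using that by (auto simp: bounded_op_zero[OF hs bounded] ip_zero_left[OF hs] ip_zero_right[OF hs])
  have "op_matrix_form ip n x (\<lambda>j. if j = b then v else 0) (\<lambda>i. if i = a then z else 0)
      = (\<Sum>i<n. if i = a then (\<Sum>j<n. if j = b then ip (x a b v) z else 0) else 0)"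
    unfolding op_matrix_form_def by (intro sum.cong refl) (simp add: entry)
  then show ?thesis
    using assms by simp
qed

lemma pos_Hn_imp_selfadj_Mn:
  assumes "pos_Hn ip n x"
  shows "selfadj_Mn ip n x"
  unfolding selfadj_Mn_def is_adjoint_def
proof (intro allI impI)
  fix a b u v
  assume "a < n" "b < n"
  have real: "op_matrix_form ip n x w w \<in> \<real>" for w
    using assms by (simp add: pos_Hn_iff_op_matrix_form_nonneg[OF hs] nonnegative_complex_is_real)
  have "ip (x a b u) v = op_matrix_form ip n x (\<lambda>j. if j = b then u else 0) (\<lambda>i. if i = a then v else 0)"
    using \<open>a < n\<close> \<open>b < n\<close> by (simp add: op_matrix_form_unit_vectors)
  also have "\<dots> = cnj (op_matrix_form ip n x (\<lambda>i. if i = a then v else 0) (\<lambda>j. if j = b then u else 0))"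
    using real by (rule op_matrix_form_hermitian)
  also have "\<dots> = cnj (ip (x b a v) u)"
    using \<open>a < n\<close> \<open>b < n\<close> by (simp add: op_matrix_form_unit_vectors)
  also have "\<dots> = ip u (x b a v)"
    by (rule ip_conj_sym[OF hs, symmetric])
  finally show "ip (x a b u) v = ip u (x b a v)" .
qed

lemma op_matrix_form_compressed_block_xx:
  fixes u :: "nat \<Rightarrow> 'h"
  assumes selfadjoint: "\<And>i. i < 2 * n \<Longrightarrow> is_adjoint ip (d i) (d i)"
  defines "w \<equiv> \<lambda>b. d b (u b) + d (b + n) (u (b + n))"
  shows "op_matrix_form ip (2 * n) (\<lambda>i j. d i \<circ> block_xx n x i j \<circ> d j) u u
    = op_matrix_form ip n x w w"
proof -
  let ?f = "op_matrix_form ip n x"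
  define v where "v j = d j (u j)" for j
  define g where "g i j = ip (x (i mod n) (j mod n) (v j)) (v i)" for i j
  have "op_matrix_form ip (2 * n) (\<lambda>i j. d i \<circ> block_xx n x i j \<circ> d j) u u
      = (\<Sum>i<2 * n. \<Sum>j<2 * n. g i j)"
    unfolding op_matrix_form_def g_def v_def block_xx_def
    using selfadjoint by (intro sum.cong refl) (simp add: is_adjoint_def)
  also have "\<dots> = (\<Sum>a<n. (\<Sum>b<n. g a b) + (\<Sum>b<n. g a (b + n)))
      + (\<Sum>a<n. (\<Sum>b<n. g (a + n) b) + (\<Sum>b<n. g (a + n) (b + n)))"
    by (simp add: sum_lessThan_double)
  also have "\<dots> = ?f v v + ?f (\<lambda>b. v (b + n)) v + (?f v (\<lambda>b. v (b + n)) + ?f (\<lambda>b. v (b + n)) (\<lambda>b. v (b + n)))"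
    unfolding op_matrix_form_def g_def by (simp add: sum.distrib)
  also have "\<dots> = ?f w w"
    unfolding w_def v_def by (simp add: op_matrix_form_add_left op_matrix_form_add_right[OF hs])
  finally show ?thesis .
qed

lemma pos_Hn_compressed_block_xx_iff:
  assumes "is_adjoint ip p p"
  defines "d \<equiv> diag_pq n p (\<lambda>u. u - p u)"
  shows "pos_Hn ip (2 * n) (\<lambda>i j. d i \<circ> block_xx n x i j \<circ> d j) \<longleftrightarrow> pos_Hn ip n x"
proof -
  let ?y = "\<lambda>i j. d i \<circ> block_xx n x i j \<circ> d j"
  have selfadjoint: "is_adjoint ip (d i) (d i)" for i
    using assms is_adjoint_complement[OF hs assms(1)] by (simp add: diag_pq_def)
  have compress: "op_matrix_form ip (2 * n) ?y u u
      = op_matrix_form ip n x (\<lambda>b. p (u b) + (u (b + n) - p (u (b + n))))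
                              (\<lambda>b. p (u b) + (u (b + n) - p (u (b + n))))" for u
  proof -
    have "op_matrix_form ip (2 * n) ?y u u
        = op_matrix_form ip n x (\<lambda>b. d b (u b) + d (b + n) (u (b + n))) (\<lambda>b. d b (u b) + d (b + n) (u (b + n)))"
      by (rule op_matrix_form_compressed_block_xx) (rule selfadjoint)
    also have "\<dots> = op_matrix_form ip n x (\<lambda>b. p (u b) + (u (b + n) - p (u (b + n))))
                              (\<lambda>b. p (u b) + (u (b + n) - p (u (b + n))))"
      by (rule op_matrix_form_cong) (simp_all add: d_def diag_pq_def)
    finally show ?thesis .
  qed
  have lift: "op_matrix_form ip n x v v = op_matrix_form ip (2 * n) ?y (\<lambda>i. v (i mod n)) (\<lambda>i. v (i mod n))"
    for v
    unfolding compress by (rule op_matrix_form_cong) simp_all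
  show ?thesis
    unfolding pos_Hn_iff_op_matrix_form_nonneg[OF hs]
  proof
    assume "\<forall>u. 0 \<le> op_matrix_form ip (2 * n) ?y u u"
    then show "\<forall>v. 0 \<le> op_matrix_form ip n x v v"
      unfolding lift by blast
  next
    assume "\<forall>v. 0 \<le> op_matrix_form ip n x v v"
    then show "\<forall>u. 0 \<le> op_matrix_form ip (2 * n) ?y u u"
      unfolding compress by blast
  qed
qed

end

theorem theorem5p3:
  fixes sc :: "complex \<Rightarrow> 'h::ab_group_add \<Rightarrow> 'h"
    and ip :: "'h \<Rightarrow> 'h \<Rightarrow> complex"
    and V :: "('h \<Rightarrow> 'h) set"
    and p :: "'h \<Rightarrow> 'h"
    and n :: nat
    and x :: "nat \<Rightarrow> nat \<Rightarrow> ('h \<Rightarrow> 'h)"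
  assumes "hilbert_space sc ip"
    and "operator_system sc ip V"
    and "p \<in> V"
    and "is_projection sc ip p"
    and "in_Mn V n x"
  shows "cone_C ip V n x \<longleftrightarrow>
         cone_CP ip V (2 * n) (diag_pq n p (\<lambda>u. u - p u)) (block_xx n x)"
proof -
  have bounded: "\<And>i j. i < n \<Longrightarrow> j < n \<Longrightarrow> bounded_op sc ip (x i j)"
    using assms(2,5) unfolding operator_system_def in_Mn_def by blast
  have "is_adjoint ip p p"
    using assms(4) unfolding is_projection_def by blast
  with assms(1) bounded
  have "pos_Hn ip (2 * n) (\<lambda>i j. diag_pq n p (\<lambda>u. u - p u) i \<circ> block_xx n x i j \<circ> diag_pq n p (\<lambda>u. u - p u) j)
      \<longleftrightarrow> pos_Hn ip n x"
    by (rule pos_Hn_compressed_block_xx_iff)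
  moreover have "pos_Hn ip n x \<Longrightarrow> selfadj_Mn ip (2 * n) (block_xx n x)"
    using assms(1) bounded by (intro selfadj_Mn_block_xx pos_Hn_imp_selfadj_Mn)
  ultimately show ?thesis
    unfolding cone_C_def cone_CP_def using assms(5) in_Mn_block_xx by blast
qed

end
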